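(* Let $\mathcal M=(Q,s_{in},s_T,s_F,\delta)$ be a Turing machine with input that never moves its input head outside the input tape. There is a closed term ${\tt trans}_{\mathcal M}$ and a constant $c$ such that for every term $k$ and every configuration $C$ with input tape string $i$: (1) if a final configuration $D$ is reachable from $C$ in $n$ transition steps, then ${\tt trans}_{\mathcal M}\,k\,\ulcorner C\urcorner\to_{det}^{m} k\,\ulcorner D\urcorner$ for some $m\le c\,(n+1)\,|i|\log_2|i|$; (2) if no final configuration is reachable from $C$, then ${\tt trans}_{\mathcal M}\,k\,\ulcorner C\urcorner$ diverges, i.e. it admits an infinite $\to_{det}$ reduction sequence.
   Context: Deterministic $\lambda$-calculus $\Lambda_{\tt det}$: terms $t ::= v \mid t\,v$, values $v ::= x\mid \lambda x.t$, evaluation contexts $E ::= [\cdot]\mid E\,v$, and $E[(\lambda x.t)v]\to_{det} E[t\{x:=v\}]$; $\to_{det}^m$ means exactly $m$ steps. Encodings: a character $a_j$ of an ordered alphabet $\Sigma=\{a_1<\dots<a_p\}$ is $\ulcorner a_j\urcorner:=\lambda x_1\ldots\lambda x_p.x_j$; strings over $\Sigma$ are $\ulcorner\varepsilon\urcorner:=\lambda x_1\ldots\lambda x_p.\lambda x_\varepsilon.x_\varepsilon$, $\ulcorner a_j r\urcorner:=\lambda x_1\ldots\lambda x_p.\lambda x_\varepsilon.x_j\ulcorner r\urcorner$. Reversed binary: $\mathrm{bin}(0)=\varepsilon$, for $n>0$ $\mathrm{bin}(n)=b_0\cdots b_\ell$ with $n=\sum_j b_j 2^j$, $b_\ell=1$,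 encoded as a string over $\{0<1\}$. Turing machines with input: $\mathbb B_I=\{0<1<\mathsf L<\mathsf R\}$, $\mathbb B_W=\{0<1<\Box\}$ ($\Box$ blank). A machine is $\mathcal M=(Q,s_{in},s_T,s_F,\delta)$ with finite ordered set of states $Q=\{s_1<\dots<s_m\}$, initial state $s_{in}$, final states $s_T,s_F$, and partial transition function $\delta:\mathbb B_I\times\mathbb B_W\times Q\rightharpoonup\{-1,+1,0\}\times\mathbb B_W\times\{\leftarrow,\rightarrow,\downarrow\}\times Q$, defined on $(b,a,s)$ only if $s\notin\{s_T,s_F\}$. A configuration is $(i,n\mid w_l,a,w_r\mid s)$ with $i=\mathsf L s'\mathsf R$, $s'\in\{0,1\}^*$, the read-only input tape string, $n\in\mathbb N$ the input-head position, $w_l,w_r\in\mathbb B_W^*$ the work tape to the left/right of the work head, $a\in\mathbb B_W$ the work-head cell, $s\in Q$; it is final if $s\in\{s_T,s_F\}$ (final configurations do not evolve). Transition: let $b$ be the character of $i$ at position $n$ (counting from $0$) and $\delta(b,a,s)=(d\mid a',\mu\mid s')$. Then $C\to_{\mathcal M} D$ where $D$ has input position $n+d$, state $s'$, and work part: if $\mu=\downarrow$, $(w_l,a',w_r)$; if $\mu=\leftarrow$ and $w_l=w a''$, $(w,a'',a'w_r)$, and if $w_l=\varepsilon$, $(\varepsilon,\Box,a'w_r)$; if $\mu=\rightarrow$ and $w_r=a''w$, $(w_l a',a'',w)$, and if $w_r=\varepsilon$, $(w_la',\Box,\varepsilon)$. The input string $i$ is unchanged. The encoding of a configuration is $\ulcorner(i,n\mid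 w_l,a,w_r\mid s)\urcorner:=\lambda x.\,x\,\ulcorner i\urcorner\,\ulcorner\mathrm{bin}(n)\urcorner\,\ulcorner w_l^{R}\urcorner\,\ulcorner a\urcorner\,\ulcorner w_r\urcorner\,\ulcorner s\urcorner$, with $i$ encoded as a string over $\mathbb B_I$, $w_l^R$ (reversal of $w_l$) and $w_r$ as strings over $\mathbb B_W$, $a$ as a character of $\mathbb B_W$, $s$ as a character of $Q$. Note $|i|\ge 2$. *)

theory Defs
  imports Complex_Main
begin

datatype dterm = Var nat | Lam dterm | App dterm dterm

fun lift :: "nat \<Rightarrow> dterm \<Rightarrow> dterm" where
  "lift k (Var i) = (if i < k then Var i else Var (Suc i))"
| "lift k (Lam t) = Lam (lift (Suc k) t)"
| "lift k (App t u) = App (lift k t) (lift k u)"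

fun subst :: "dterm \<Rightarrow> nat \<Rightarrow> dterm \<Rightarrow> dterm" where
  "subst (Var i) k s = (if i < k then Var i else if i = k then s else Var (i - 1))"
| "subst (Lam t) k s = Lam (subst t (Suc k) (lift 0 s))"
| "subst (App t u) k s = App (subst t k s) (subst u k s)"

fun closed_at :: "nat \<Rightarrow> dterm \<Rightarrow> bool" where
  "closed_at k (Var i) = (i < k)"
| "closed_at k (Lam t) = closed_at (Suc k) t"
| "closed_at k (App t u) = (closed_at k t \<and> closed_at k u)"

definition closed :: "dterm \<Rightarrow> bool" where
  "closed t = closed_at 0 t"

inductive det_value :: "dterm \<Rightarrow> bool" and det_term :: "dterm \<Rightarrow> bool" where
  dv_var: "det_value (Var i)"
| dv_lam: "det_term t \<Longrightarrow> det_value (Lam t)"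
| dt_val: "det_value v \<Longrightarrow> det_term v"
| dt_app: "det_term t \<Longrightarrow> det_value v \<Longrightarrow> det_term (App t v)"

inductive det_step :: "dterm \<Rightarrow> dterm \<Rightarrow> bool" where
  beta: "det_value v \<Longrightarrow> det_step (App (Lam t) v) (subst t 0 v)"
| ctx: "det_step t t' \<Longrightarrow> det_value v \<Longrightarrow> det_step (App t v) (App t' v)"

definition det_steps :: "nat \<Rightarrow> dterm \<Rightarrow> dterm \<Rightarrow> bool" where
  "det_steps m = det_step ^^ m"

definition diverges :: "dterm \<Rightarrow> bool" where
  "diverges t = (\<exists>f. f 0 = t \<and> (\<forall>j. det_step (f j) (f (Suc j))))"

definition lams :: "nat \<Rightarrow> dterm \<Rightarrow> dterm" where
  "lams n t = (Lam ^^ n) t"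

text \<open>character a_j (1-based j) of an alphabet of size p: \<lambda>x1...\<lambda>xp. xj\<close>
definition enc_char :: "nat \<Rightarrow> nat \<Rightarrow> dterm" where
  "enc_char p j = lams p (Var (p - j))"

text \<open>string given as list of 1-based character indices\<close>
fun enc_str :: "nat \<Rightarrow> nat list \<Rightarrow> dterm" where
  "enc_str p [] = lams (Suc p) (Var 0)"
| "enc_str p (j # r) = lams (Suc p) (App (Var (Suc p - j)) (enc_str p r))"

text \<open>reversed binary, least significant bit first\<close>
fun bin :: "nat \<Rightarrow> nat list" where
  "bin n = (if n = 0 then [] else (n mod 2) # bin (n div 2))"

declare bin.simps[simp del]

datatype binI = I0 | I1 | IL | IR
datatype binW = W0 | W1 | Blank
datatype move = MLeft | MRight | MStay

fun idxI :: "binI \<Rightarrow> nat" where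
  "idxI I0 = 1" | "idxI I1 = 2" | "idxI IL = 3" | "idxI IR = 4"

fun idxW :: "binW \<Rightarrow> nat" where
  "idxW W0 = 1" | "idxW W1 = 2" | "idxW Blank = 3"

text \<open>The ordered finite set of states Q is the whole finite linearly ordered type 'q.\<close>
definition idxQ :: "'q::{finite,linorder} \<Rightarrow> nat" where
  "idxQ s = card {q. q \<le> s}"

record 'q tm =
  s_in :: 'q
  s_T :: 'q
  s_F :: 'q
  delta :: "binI \<Rightarrow> binW \<Rightarrow> 'q \<Rightarrow> (int \<times> binW \<times> move \<times> 'q) option"

definition wf_tm :: "'q tm \<Rightarrow> bool" where
  "wf_tm M = (\<forall>b a s d a' mu s'. delta M b a s = Some (d, a', mu, s') \<longrightarrow>
       s \<notin> {s_T M, s_F M} \<and> d \<in> {-1, 0, 1})"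

record 'q config =
  inp :: "binI list"
  pos :: nat
  wleft :: "binW list"
  cur :: binW
  wright :: "binW list"
  state :: 'q

definition valid_input :: "binI list \<Rightarrow> bool" where
  "valid_input i = (\<exists>s'. set s' \<subseteq> {I0, I1} \<and> i = IL # s' @ [IR])"

definition is_config :: "'q config \<Rightarrow> bool" where
  "is_config C = (valid_input (inp C) \<and> pos C < length (inp C))"

definition is_final :: "'q tm \<Rightarrow> 'q config \<Rightarrow> bool" where
  "is_final M C = (state C \<in> {s_T M, s_F M})"

definition stays_on_input :: "'q tm \<Rightarrow> bool" where
  "stays_on_input M = (\<forall>i n a s d a' mu s'. valid_input i \<longrightarrow> n < length i \<longrightarrow>
      delta M (i ! n) a s = Some (d, a', mu, s') \<longrightarrow>
      0 \<le> int n + d \<and> int n + d < int (length i))"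

fun move_work :: "move \<Rightarrow> binW list \<Rightarrow> binW \<Rightarrow> binW list \<Rightarrow> binW list \<times> binW \<times> binW list" where
  "move_work MStay wl a' wr = (wl, a', wr)"
| "move_work MLeft wl a' wr =
     (if wl = [] then ([], Blank, a' # wr) else (butlast wl, last wl, a' # wr))"
| "move_work MRight wl a' wr =
     (case wr of [] \<Rightarrow> (wl @ [a'], Blank, []) | a'' # w \<Rightarrow> (wl @ [a'], a'', w))"

inductive tm_step :: "'q tm \<Rightarrow> 'q config \<Rightarrow> 'q config \<Rightarrow> bool" for M where
  "\<not> is_final M C \<Longrightarrow> pos C < length (inp C) \<Longrightarrow>
   delta M (inp C ! pos C) (cur C) (state C) = Some (d, a', mu, s') \<Longrightarrow>
   0 \<le> int (pos C) + d \<Longrightarrow>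
   move_work mu (wleft C) a' (wright C) = (wl, a, wr) \<Longrightarrow>
   tm_step M C \<lparr>inp = inp C, pos = nat (int (pos C) + d), wleft = wl, cur = a,
                 wright = wr, state = s'\<rparr>"

definition enc_config :: "'q::{finite,linorder} config \<Rightarrow> dterm" where
  "enc_config C = Lam (App (App (App (App (App (App (Var 0)
      (enc_str 4 (map idxI (inp C))))
      (enc_str 2 (map Suc (bin (pos C)))))
      (enc_str 3 (map idxW (rev (wleft C)))))
      (enc_char 3 (idxW (cur C))))
      (enc_str 3 (map idxW (wright C))))
      (enc_char (card (UNIV :: 'q set)) (idxQ (state C))))"

end

theory Submission
  imports Defs
begin

text \<open>The simulating term decodes the configuration and first splits the input tape at the head
  position into its reversed left part and its right part, counting the binary head position down
  to zero (\<open>O(|i| log |i|)\<close> steps).  The loop then carries the split input tape, the head position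
  in binary, and the work tape as a zipper.  One loop iteration selects, by applying the encoded
  state, the encoded work cell and the encoded input cell to tables of branches, the code for the
  transition \<open>\<delta>(b, a, s)\<close>; it moves the input head by shifting one cell across the split and
  incrementing or decrementing the binary position (\<open>O(log |i|)\<close> steps), moves the work head in
  constant time and re-enters the loop.  A final state re-encodes the configuration and passes it
  to the continuation; an undefined transition reduces to \<open>\<Omega>\<close>.  Each simulated step thus costs
  \<open>O(log |i|)\<close> steps, which gives the bound \<open>c (n + 1) |i| log |i|\<close>.\<close>

section \<open>Weak call-by-value reduction\<close>

lemma det_value_simps [simp]:
  "det_value (Var i)"
  "det_value (Lam t) = det_term t"
  "\<not> det_value (App t u)"
  by (auto intro: det_value_det_term.intros elim: det_value.cases)

lemma det_term_App [simp]: "det_term (App t v) = (det_term t \<and> det_value v)"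
  by (auto intro: det_value_det_term.intros elim: det_term.cases)

lemma det_value_imp_det_term [simp]: "det_value t \<Longrightarrow> det_term t"
  by (rule det_value_det_term.intros)

lemma det_term_Lam [simp]: "det_term (Lam t) = det_term t"
  by (auto intro: det_value_det_term.intros elim: det_term.cases)

lemma closed_at_mono: "closed_at n t \<Longrightarrow> n \<le> m \<Longrightarrow> closed_at m t"
  by (induction t arbitrary: n m) auto

lemma closed_at_Suc_of_closed_at_0 [simp]: "closed_at 0 t \<Longrightarrow> closed_at (Suc n) t"
  by (erule closed_at_mono) simp

lemma lift_closed_at: "closed_at n t \<Longrightarrow> n \<le> k \<Longrightarrow> lift k t = t"
  by (induction t arbitrary: n k) auto

lemma subst_closed_at: "closed_at n t \<Longrightarrow> n \<le> k \<Longrightarrow> subst t k s = t"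
  by (induction t arbitrary: n k s) auto

lemma lift_closed [simp]: "closed_at 0 t \<Longrightarrow> lift k t = t"
  using lift_closed_at by blast

lemma subst_closed [simp]: "closed_at 0 t \<Longrightarrow> subst t k s = t"
  using subst_closed_at by blast

lemma subst_lift [simp]: "subst (lift k t) k s = t"
  by (induction t arbitrary: k s) auto

fun apps :: "dterm \<Rightarrow> dterm list \<Rightarrow> dterm" where
  "apps t [] = t"
| "apps t (v # vs) = apps (App t v) vs"

lemma subst_apps [simp]: "subst (apps t vs) k s = apps (subst t k s) (map (\<lambda>v. subst v k s) vs)"
  by (induction vs arbitrary: t) auto

lemma closed_at_apps [simp]:
  "closed_at n (apps t vs) = (closed_at n t \<and> (\<forall>v\<in>set vs. closed_at n v))"
  by (induction vs arbitrary: t) auto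

lemma det_term_apps [simp]: "det_term (apps t vs) = (det_term t \<and> (\<forall>v\<in>set vs. det_value v))"
  by (induction vs arbitrary: t) auto

lemma map_subst_closed [simp]: "\<forall>v\<in>set vs. closed_at 0 v \<Longrightarrow> map (\<lambda>v. subst v k s) vs = vs"
  by (induction vs) auto

lemma det_steps_App:
  "(det_step ^^ n) t t' \<Longrightarrow> det_value v \<Longrightarrow> (det_step ^^ n) (App t v) (App t' v)"
proof (induction n arbitrary: t')
  case (Suc n)
  then obtain u where "(det_step ^^ n) t u" "det_step u t'" by auto
  with Suc show ?case by (auto intro: det_step.ctx)
qed simp

lemma det_step_apps:
  "det_step t t' \<Longrightarrow> \<forall>v\<in>set vs. det_value v \<Longrightarrow> det_step (apps t vs) (apps t' vs)"
  by (induction vs arbitrary: t t') (auto intro: det_step.ctx)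

lemma det_steps_apps:
  "(det_step ^^ n) t t' \<Longrightarrow> \<forall>v\<in>set vs. det_value v \<Longrightarrow> (det_step ^^ n) (apps t vs) (apps t' vs)"
  by (induction vs arbitrary: t t') (auto intro: det_steps_App)

lemma det_steps_trans:
  "(det_step ^^ a) t u \<Longrightarrow> (det_step ^^ b) u v \<Longrightarrow> (det_step ^^ (a + b)) t v"
  by (metis relpowp_add relcomppI)

definition red_within :: "nat \<Rightarrow> dterm \<Rightarrow> dterm \<Rightarrow> bool" where
  "red_within n t t' = (\<exists>m\<le>n. (det_step ^^ m) t t')"

lemma red_within_trans: "red_within a t u \<Longrightarrow> red_within b u v \<Longrightarrow> red_within (a + b) t v"
  unfolding red_within_def by (metis add_le_mono det_steps_trans)

lemma red_within_mono: "red_within a t u \<Longrightarrow> a \<le> b \<Longrightarrow> red_within b t u"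
  unfolding red_within_def using order.trans by blast

lemma red_within_apps:
  "red_within n t t' \<Longrightarrow> \<forall>v\<in>set vs. det_value v \<Longrightarrow> red_within n (apps t vs) (apps t' vs)"
  unfolding red_within_def using det_steps_apps by blast

lemma red_within_App:
  "red_within n t t' \<Longrightarrow> det_value v \<Longrightarrow> red_within n (App t v) (App t' v)"
  unfolding red_within_def using det_steps_App by blast

text \<open>The divergence argument needs reductions that make progress.\<close>

definition red_within_pos :: "nat \<Rightarrow> dterm \<Rightarrow> dterm \<Rightarrow> bool" where
  "red_within_pos n t t' = (\<exists>m. 0 < m \<and> m \<le> n \<and> (det_step ^^ m) t t')"

lemma red_within_pos_imp_red_within: "red_within_pos n t t' \<Longrightarrow> red_within n t t'"
  unfolding red_within_pos_def red_within_def by blast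

lemma red_within_pos_trans:
  "red_within_pos a t u \<Longrightarrow> red_within b u v \<Longrightarrow> red_within_pos (a + b) t v"
  unfolding red_within_pos_def red_within_def by (metis add_le_mono add_pos_nonneg le0 det_steps_trans)

lemma red_within_pos_mono: "red_within_pos a t u \<Longrightarrow> a \<le> b \<Longrightarrow> red_within_pos b t u"
  unfolding red_within_pos_def using order.trans by blast

text \<open>An executable version of \<open>det_step\<close>: concrete reductions are computed by the simplifier.\<close>

fun next_step :: "dterm \<Rightarrow> dterm option" where
  "next_step (App (Lam t) v) = (if det_value v then Some (subst t 0 v) else None)"
| "next_step (App (App t u) v) =
     (if det_value v then map_option (\<lambda>t'. App t' v) (next_step (App t u)) else None)"
| "next_step _ = None"

lemma next_step_sound: "next_step t = Some t' \<Longrightarrow> det_step t t'"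
  by (induction t arbitrary: t' rule: next_step.induct)
     (auto split: if_splits intro: det_step.intros)

fun run_steps :: "nat \<Rightarrow> dterm \<Rightarrow> dterm option" where
  "run_steps 0 t = Some t"
| "run_steps (Suc n) t = (case next_step t of None \<Rightarrow> None | Some t' \<Rightarrow> run_steps n t')"

lemma run_steps_sound: "run_steps n t = Some t' \<Longrightarrow> (det_step ^^ n) t t'"
proof (induction n arbitrary: t)
  case (Suc n)
  then obtain u where "next_step t = Some u" "run_steps n u = Some t'"
    by (auto split: option.splits)
  with Suc.IH next_step_sound show ?case by (metis relpowp_Suc_I2)
qed simp

lemma run_steps_numeral [simp]:
  "run_steps (numeral k) t =
     (case next_step t of None \<Rightarrow> None | Some t' \<Rightarrow> run_steps (pred_numeral k) t')"
  by (simp add: numeral_eq_Suc)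

lemma red_within_run_steps: "run_steps m t = Some t' \<Longrightarrow> m \<le> n \<Longrightarrow> red_within n t t'"
  unfolding red_within_def using run_steps_sound by blast

lemma red_within_pos_run_steps:
  "run_steps m t = Some t' \<Longrightarrow> 0 < m \<Longrightarrow> m \<le> n \<Longrightarrow> red_within_pos n t t'"
  unfolding red_within_pos_def using run_steps_sound by blast

lemma diverges_Suc: "diverges t \<Longrightarrow> \<exists>u. det_step t u \<and> diverges u"
proof -
  assume "diverges t"
  then obtain f where f: "f 0 = t" "\<forall>j. det_step (f j) (f (Suc j))"
    unfolding diverges_def by blast
  moreover have "diverges (f 1)"
    unfolding diverges_def using f by (intro exI[of _ "\<lambda>j. f (Suc j)"]) simp
  ultimately show ?thesis by (metis One_nat_def)
qed

lemma diverges_det_step: "det_step t u \<Longrightarrow> diverges u \<Longrightarrow> diverges t"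
proof -
  assume tu: "det_step t u" and "diverges u"
  then obtain f where f: "f 0 = u" "\<forall>j. det_step (f j) (f (Suc j))"
    unfolding diverges_def by blast
  show ?thesis unfolding diverges_def
    by (rule exI[of _ "\<lambda>j. case j of 0 \<Rightarrow> t | Suc i \<Rightarrow> f i"]) (simp add: f tu split: nat.split)
qed

lemma diverges_det_steps: "(det_step ^^ n) t u \<Longrightarrow> diverges u \<Longrightarrow> diverges t"
proof (induction n arbitrary: t)
  case (Suc n)
  then obtain w where "det_step t w" "(det_step ^^ n) w u"
    using relpowp_Suc_D2 by metis
  with Suc show ?case using diverges_det_step by blast
qed simp

lemma diverges_App: "diverges t \<Longrightarrow> det_value v \<Longrightarrow> diverges (App t v)"
proof -
  assume "diverges t" "det_value v"
  then obtain f where f: "f 0 = t" "\<forall>j. det_step (f j) (f (Suc j))"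
    unfolding diverges_def by blast
  with \<open>det_value v\<close> show ?thesis unfolding diverges_def
    by (intro exI[of _ "\<lambda>j. App (f j) v"]) (simp add: det_step.ctx)
qed

lemma diverges_coinduct:
  assumes "Q t" and "\<And>t. Q t \<Longrightarrow> \<exists>u. det_step t u \<and> Q u"
  shows "diverges t"
proof -
  define next_term where "next_term = (\<lambda>t. SOME u. det_step t u \<and> Q u)"
  have next_term: "det_step t (next_term t) \<and> Q (next_term t)" if "Q t" for t
    using someI_ex[OF assms(2)[OF that]] unfolding next_term_def .
  define f where "f n = (next_term ^^ n) t" for n
  have "Q (f n)" for n
    by (induction n) (use assms(1) next_term in \<open>simp_all add: f_def\<close>)
  then show ?thesis
    unfolding diverges_def using next_term by (intro exI[of _ f]) (simp add: f_def)
qed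

abbreviation Omega :: dterm where
  "Omega \<equiv> App (Lam (App (Var 0) (Var 0))) (Lam (App (Var 0) (Var 0)))"

lemma Omega_diverges: "diverges Omega"
  by (rule diverges_coinduct[where Q = "\<lambda>t. t = Omega"]) (auto intro: next_step_sound)

lemma diverges_progress:
  assumes "P t0" and progress: "\<And>t. P t \<Longrightarrow> \<exists>t' j. P t' \<and> (det_step ^^ Suc j) t t'"
  shows "diverges t0"
proof (rule diverges_coinduct[where Q = "\<lambda>t. \<exists>u j. (det_step ^^ j) t u \<and> P u"])
  show "\<exists>u j. (det_step ^^ j) t0 u \<and> P u"
    using assms(1) by (intro exI[of _ t0] exI[of _ 0]) simp
next
  fix t assume "\<exists>u j. (det_step ^^ j) t u \<and> P u"
  then obtain u j where tu: "(det_step ^^ j) t u" and "P u" by blast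
  obtain j' v where "(det_step ^^ Suc j') t v" and "P v"
  proof (cases j)
    case 0
    with tu progress[OF \<open>P u\<close>] that show ?thesis by auto
  next
    case (Suc j')
    with tu \<open>P u\<close> that show ?thesis by blast
  qed
  then obtain w where "det_step t w" "(det_step ^^ j') w v"
    using relpowp_Suc_D2 by metis
  with \<open>P v\<close> show "\<exists>u. det_step t u \<and> (\<exists>w j. (det_step ^^ j) u w \<and> P w)" by blast
qed

section \<open>Encodings and the simulating programs\<close>

lemma lams_0 [simp]: "lams 0 t = t"
  by (simp add: lams_def)

lemma lams_Suc [simp]: "lams (Suc n) t = Lam (lams n t)"
  by (simp add: lams_def)

lemma lams_numeral [simp]: "lams (numeral k) t = Lam (lams (pred_numeral k) t)"
  by (simp add: numeral_eq_Suc)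

lemma closed_at_lams [simp]: "closed_at n (lams k t) = closed_at (n + k) t"
  by (induction k arbitrary: n) auto

lemma det_value_lams [simp]: "det_value (lams (Suc k) t) = det_term t"
  by (induction k) auto

lemma det_term_lams [simp]: "det_term (lams k t) = det_term t"
  by (induction k) auto

lemma subst_lams_closed: "closed_at 0 v \<Longrightarrow> subst (lams n t) k v = lams n (subst t (k + n) v)"
  by (induction n arbitrary: k) auto

lemma closed_at_enc_str [simp]: "\<forall>j\<in>set l. 0 < j \<Longrightarrow> closed_at n (enc_str p l)"
  by (induction l arbitrary: n) (auto intro: closed_at_mono)

lemma det_value_enc_str [simp]: "det_value (enc_str p l)"
  by (induction l) auto

lemma closed_at_enc_char [simp]: "0 < j \<Longrightarrow> j \<le> p \<Longrightarrow> closed_at n (enc_char p j)"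
  by (simp add: enc_char_def)

lemma det_value_enc_char [simp]: "det_value (enc_char p j)"
  by (cases p) (auto simp: enc_char_def)

lemma det_step_lams_closed:
  "closed_at 0 v \<Longrightarrow> det_value v \<Longrightarrow> det_step (App (lams (Suc n) t) v) (lams n (subst t n v))"
  using det_step.beta[of v "lams n t"] by (simp add: subst_lams_closed)

lemma det_steps_lams_const:
  "closed_at 0 u \<Longrightarrow> \<forall>v\<in>set vs. closed_at 0 v \<and> det_value v \<Longrightarrow>
   (det_step ^^ length vs) (apps (lams (length vs) u) vs) u"
proof (induction vs)
  case (Cons v vs)
  then have "(det_step ^^ 1) (apps (lams (length (v # vs)) u) (v # vs)) (apps (lams (length vs) u) vs)"
    using det_step_lams_closed[of v "length vs" u] det_step_apps by fastforce
  with Cons show ?case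
    using det_steps_trans[of 1] by fastforce
qed simp

lemma det_steps_lams_Var:
  "length vs = n \<Longrightarrow> x < n \<Longrightarrow> \<forall>v\<in>set vs. closed_at 0 v \<and> det_value v \<Longrightarrow>
   (det_step ^^ n) (apps (lams n (Var x)) vs) (vs ! (n - 1 - x))"
proof (induction vs arbitrary: n)
  case (Cons v vs)
  then obtain n' where n': "n = Suc n'" "length vs = n'" by auto
  have first: "(det_step ^^ 1) (apps (lams n (Var x)) (v # vs)) (apps (lams n' (subst (Var x) n' v)) vs)"
    using det_step_lams_closed[of v n' "Var x"] Cons.prems n' det_step_apps by fastforce
  show ?case
  proof (cases "x = n'")
    case True
    then have "(det_step ^^ n') (apps (lams n' (subst (Var x) n' v)) vs) v"
      using det_steps_lams_const[of v vs] Cons.prems n' by simp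
    then show ?thesis using det_steps_trans[OF first] n' True by simp
  next
    case False
    with Cons.prems n' have "x < n'" by simp
    then have "(det_step ^^ n') (apps (lams n' (subst (Var x) n' v)) vs) ((v # vs) ! (n - 1 - x))"
      using Cons.IH[of n'] Cons.prems n' by (simp add: nth_Cons')
    then show ?thesis using det_steps_trans[OF first] n' by simp
  qed
qed simp

lemma red_within_enc_char:
  "length vs = p \<Longrightarrow> 0 < j \<Longrightarrow> j \<le> p \<Longrightarrow> \<forall>v\<in>set vs. closed_at 0 v \<and> det_value v \<Longrightarrow>
   red_within p (apps (enc_char p j) vs) (vs ! (j - 1))"
  using det_steps_lams_Var[of vs p "p - j"] unfolding enc_char_def red_within_def by auto

abbreviation enc_bin :: "nat \<Rightarrow> dterm" where
  "enc_bin n \<equiv> enc_str 2 (map Suc (bin n))"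

abbreviation enc_inp :: "binI list \<Rightarrow> dterm" where
  "enc_inp l \<equiv> enc_str 4 (map idxI l)"

abbreviation enc_work :: "binW list \<Rightarrow> dterm" where
  "enc_work l \<equiv> enc_str 3 (map idxW l)"

abbreviation enc_cell :: "binW \<Rightarrow> dterm" where
  "enc_cell x \<equiv> enc_char 3 (idxW x)"

definition enc_state :: "'q::{finite,linorder} \<Rightarrow> dterm" where
  "enc_state s = enc_char (card (UNIV :: 'q set)) (idxQ s)"

text \<open>The programs are written in continuation-passing style with de Bruijn indices.  A recursive
  program \<open>P\<close> receives itself as its first argument instead of using a fixed-point combinator,
  and is defined as \<open>P = Lam P_body\<close>, so that the simplifier unfolds one call at a time.\<close>

definition DEC_body :: "dterm" where
  "DEC_body =
     lams 2 (apps (Var 1)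
               [lams 3 (apps (Var 1)
                          [Var 1, Var 2, Lam (App (Var 1) (lams 3 (App (Var 1) (Var 3))))]),
                lams 3 (apps (Var 2)
                          [lams 3 (App (Var 1) (lams 3 (App (Var 2) (Var 3)))),
                           lams 3 (App (Var 1) (lams 3 (App (Var 2) (Var 3)))),
                           lams 2 (App (Var 1) (enc_str 2 [])), Var 0, Var 2]),
                lams 2 (App (Var 0) (enc_str 2 [])), Var 2, Var 0])"

definition DEC :: dterm where "DEC = Lam DEC_body"

definition INC_body :: "dterm" where
  "INC_body =
     lams 2 (apps (Var 1)
               [lams 3 (App (Var 0) (lams 3 (App (Var 1) (Var 5)))),
                lams 3 (apps (Var 1)
                          [Var 1, Var 2, Lam (App (Var 1) (lams 3 (App (Var 2) (Var 3))))]),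
                lams 2 (App (Var 0) (lams 3 (App (Var 1) (enc_str 2 [])))), Var 2, Var 0])"

definition INC :: dterm where "INC = Lam INC_body"

text \<open>\<open>SPLIT\<close> inspects the first bit of the counter only to test it for zero.\<close>

definition SPLIT_step :: "dterm" where
  "SPLIT_step =
     lams 6 (apps DEC
               [DEC, Var 3,
                Lam (apps (Var 2)
                       [lams 5 (apps (Var 3) [Var 3, Var 2, lams 5 (App (Var 4) (Var 6)), Var 4, Var 0]),
                        lams 5 (apps (Var 3) [Var 3, Var 2, lams 5 (App (Var 3) (Var 6)), Var 4, Var 0]),
                        lams 5 (apps (Var 3) [Var 3, Var 2, lams 5 (App (Var 2) (Var 6)), Var 4, Var 0]),
                        lams 5 (apps (Var 3) [Var 3, Var 2, lams 5 (App (Var 1) (Var 6)), Var 4, Var 0]),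
                        lams 4 (apps (Var 0) [Var 1, enc_str 4 []]), Var 5, Var 0, Var 3, Var 1])])"

definition SPLIT_body :: "dterm" where
  "SPLIT_body =
     lams 4 (apps (Var 3)
               [SPLIT_step, SPLIT_step, lams 5 (apps (Var 0) [Var 2, Var 1]),
                Var 4, Var 3, Var 2, Var 1, Var 0])"

definition SPLIT :: dterm where "SPLIT = Lam SPLIT_body"

definition MOVE_INPUT_right_body :: "binI \<Rightarrow> dterm" where
  "MOVE_INPUT_right_body b =
     lams 3 (apps INC
               [INC, Var 1,
                Lam (apps (Var 1) [lams 5 (App (Var (5 - idxI b)) (Var 9)), Var 3, Var 0])])"

definition MOVE_INPUT_stay_body :: "binI \<Rightarrow> dterm" where
  "MOVE_INPUT_stay_body b =
     lams 3 (apps (Var 0) [Var 3, lams 5 (App (Var (5 - idxI b)) (Var 7)), Var 1])"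

definition MOVE_INPUT_left_body :: "binI \<Rightarrow> dterm" where
  "MOVE_INPUT_left_body b =
     lams 3 (apps DEC
               [DEC, Var 1,
                Lam (apps (Var 4)
                       [lams 4 (apps (Var 0)
                                  [Var 3,
                                   lams 5 (App (Var 4) (lams 5 (App (Var (5 - idxI b)) (Var 12)))),
                                   Var 1]),
                        lams 4 (apps (Var 0)
                                  [Var 3,
                                   lams 5 (App (Var 3) (lams 5 (App (Var (5 - idxI b)) (Var 12)))),
                                   Var 1]),
                        lams 4 (apps (Var 0)
                                  [Var 3,
                                   lams 5 (App (Var 2) (lams 5 (App (Var (5 - idxI b)) (Var 12)))),
                                   Var 1]),
                        lams 4 (apps (Var 0)
                                  [Var 3,
                                   lams 5 (App (Var 1) (lams 5 (App (Var (5 - idxI b)) (Var 12)))),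
                                   Var 1]),
                        lams 3 (apps (Var 0) [enc_str 4 [], Var 2, Var 1]), Var 3, Var 0, Var 1])])"

definition MOVE_INPUT_body :: "int \<Rightarrow> binI \<Rightarrow> dterm" where
  "MOVE_INPUT_body d b =
     (if d = 1 then MOVE_INPUT_right_body b else if d = 0 then MOVE_INPUT_stay_body b
      else MOVE_INPUT_left_body b)"

definition MOVE_INPUT :: "int \<Rightarrow> binI \<Rightarrow> dterm" where
  "MOVE_INPUT d b = Lam (MOVE_INPUT_body d b)"

definition MOVE_WORK_body :: "move \<Rightarrow> binW \<Rightarrow> dterm" where
  "MOVE_WORK_body mu a =
     (case mu of
        MStay \<Rightarrow>
        lams 2 (apps (Var 0) [Var 2, enc_char 3 (idxW a), Var 1])
      | MLeft \<Rightarrow>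
        lams 2 (apps (Var 2)
                  [lams 3 (apps (Var 0)
                             [Var 2, enc_char 3 1, lams 4 (App (Var (4 - idxW a)) (Var 5))]),
                   lams 3 (apps (Var 0)
                             [Var 2, enc_char 3 2, lams 4 (App (Var (4 - idxW a)) (Var 5))]),
                   lams 3 (apps (Var 0)
                             [Var 2, enc_char 3 3, lams 4 (App (Var (4 - idxW a)) (Var 5))]),
                   lams 2 (apps (Var 0)
                             [enc_str 3 [], enc_char 3 3, lams 4 (App (Var (4 - idxW a)) (Var 5))]),
                   Var 1, Var 0])
      | MRight \<Rightarrow>
        lams 2 (apps (Var 1)
                  [lams 3 (apps (Var 0)
                             [lams 4 (App (Var (4 - idxW a)) (Var 5)), enc_char 3 1, Var 2]),
                   lams 3 (apps (Var 0)
                             [lams 4 (App (Var (4 - idxW a)) (Var 5)), enc_char 3 2, Var 2]),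
                   lams 3 (apps (Var 0)
                             [lams 4 (App (Var (4 - idxW a)) (Var 5)), enc_char 3 3, Var 2]),
                   lams 2 (apps (Var 0)
                             [lams 4 (App (Var (4 - idxW a)) (Var 5)), enc_char 3 3, enc_str 3 []]),
                   Var 2, Var 0]))"

definition MOVE_WORK :: "move \<Rightarrow> binW \<Rightarrow> dterm" where
  "MOVE_WORK mu a = Lam (MOVE_WORK_body mu a)"

definition STEP_LEAF_body ::
  "int \<Rightarrow> binI \<Rightarrow> binW \<Rightarrow> move \<Rightarrow> 'q::{finite,linorder} \<Rightarrow> dterm" where
  "STEP_LEAF_body d b a mu s =
     lams 6 (apps (MOVE_INPUT d b)
               [Var 4, Var 6, Var 3,
                lams 3 (apps (MOVE_WORK mu a)
                          [Var 5, Var 4,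
                           lams 3 (apps (Var 6)
                                     [Var 6, Var 11, Var 5, Var 4, Var 3, Var 2, Var 1, Var 0,
                                      enc_state s])])])"

definition STEP_LEAF ::
  "int \<Rightarrow> binI \<Rightarrow> binW \<Rightarrow> move \<Rightarrow> 'q::{finite,linorder} \<Rightarrow> dterm" where
  "STEP_LEAF d b a mu s = Lam (STEP_LEAF_body d b a mu s)"

definition STUCK_LEAF_body :: "dterm" where
  "STUCK_LEAF_body = lams 6 Omega"

definition STUCK_LEAF :: dterm where "STUCK_LEAF = Lam STUCK_LEAF_body"

definition leaf ::
  "'q::{finite,linorder} tm \<Rightarrow> 'q \<Rightarrow> binW \<Rightarrow> binI \<Rightarrow> dterm" where
  "leaf M s a b =
     (case delta M b a s of None \<Rightarrow> STUCK_LEAF | Some (d, a', mu, s') \<Rightarrow> STEP_LEAF d b a' mu s')"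

definition READ_INPUT_body ::
  "'q::{finite,linorder} tm \<Rightarrow> 'q \<Rightarrow> binW \<Rightarrow> dterm" where
  "READ_INPUT_body M s a =
     lams 6 (apps (Var 4)
               [leaf M s a I0, leaf M s a I1, leaf M s a IL, leaf M s a IR, lams 6 (Var 5), Var 6,
                Var 5, Var 3, Var 2, Var 1, Var 0])"

definition READ_INPUT ::
  "'q::{finite,linorder} tm \<Rightarrow> 'q \<Rightarrow> binW \<Rightarrow> dterm" where
  "READ_INPUT M s a = Lam (READ_INPUT_body M s a)"

definition READ_WORK_body :: "'q::{finite,linorder} tm \<Rightarrow> 'q \<Rightarrow> dterm" where
  "READ_WORK_body M s =
     lams 7 (apps (Var 2)
               [READ_INPUT M s W0, READ_INPUT M s W1, READ_INPUT M s Blank, Var 7, Var 6, Var 5,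
                Var 4, Var 3, Var 1, Var 0])"

definition READ_WORK :: "'q::{finite,linorder} tm \<Rightarrow> 'q \<Rightarrow> dterm" where
  "READ_WORK M s = Lam (READ_WORK_body M s)"

definition OUTPUT_body :: "'q::{finite,linorder} \<Rightarrow> dterm" where
  "OUTPUT_body s =
     lams 8 (App (Var 0) (Lam (apps (Var 0) [Var 9, Var 6, Var 5, Var 4, Var 3, enc_state s])))"

definition OUTPUT :: "'q::{finite,linorder} \<Rightarrow> dterm" where
  "OUTPUT s = Lam (OUTPUT_body s)"

definition state_branch :: "'q::{finite,linorder} tm \<Rightarrow> 'q \<Rightarrow> dterm" where
  "state_branch M s = (if s \<in> {s_T M, s_F M} then OUTPUT s else READ_WORK M s)"

definition state_branches :: "'q::{finite,linorder} tm \<Rightarrow> dterm list" where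
  "state_branches M = map (state_branch M) (sorted_list_of_set (UNIV :: 'q set))"

definition LOOP_body :: "'q::{finite,linorder} tm \<Rightarrow> dterm" where
  "LOOP_body M =
     lams 8 (apps (apps (Var 0) (state_branches M)) [Var 7, Var 6, Var 5, Var 4, Var 3, Var 2, Var 1, Var 8])"

definition LOOP :: "'q::{finite,linorder} tm \<Rightarrow> dterm" where "LOOP M = Lam (LOOP_body M)"

definition INIT_body :: "'q::{finite,linorder} tm \<Rightarrow> dterm" where
  "INIT_body M =
     lams 5 (apps SPLIT
               [SPLIT, Var 4, enc_str 4 [], Var 5,
                lams 2 (apps (LOOP M)
                          [LOOP M, Var 7, Var 1, Var 0, Var 6, Var 5, Var 4, Var 3, Var 2])])"

definition INIT :: "'q::{finite,linorder} tm \<Rightarrow> dterm" where "INIT M = Lam (INIT_body M)"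

definition TRANS_body :: "'q::{finite,linorder} tm \<Rightarrow> dterm" where
  "TRANS_body M = Lam (App (App (Var 0) (INIT M)) (Var 1))"

definition TRANS :: "'q::{finite,linorder} tm \<Rightarrow> dterm" where
  "TRANS M = Lam (TRANS_body M)"

lemma idxQ_pos: "0 < idxQ (s::'q::{finite,linorder})"
  unfolding idxQ_def by (subst card_gt_0_iff) auto

lemma idxQ_le: "idxQ (s::'q::{finite,linorder}) \<le> card (UNIV :: 'q set)"
  unfolding idxQ_def by (rule card_mono) auto

lemma closed_at_enc_state [simp]: "closed_at n (enc_state s)"
  unfolding enc_state_def by (rule closed_at_enc_char) (simp_all add: idxQ_pos idxQ_le)

lemma det_value_enc_state [simp]: "det_value (enc_state s)"
  unfolding enc_state_def by simp

lemma idxI_pos [simp]: "0 < idxI b" by (cases b) auto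

lemma idxW_pos [simp]: "0 < idxW b" by (cases b) auto

lemma idxI_le [simp]: "idxI b \<le> 4" by (cases b) auto

lemma idxW_le [simp]: "idxW b \<le> 3" by (cases b) auto

lemma closed_at_DEC [simp]: "closed_at n DEC"
  and det_value_DEC [simp]: "det_value DEC"
  by (simp_all add: DEC_def DEC_body_def)

lemma closed_at_INC [simp]: "closed_at n INC"
  and det_value_INC [simp]: "det_value INC"
  by (simp_all add: INC_def INC_body_def)

lemma closed_at_SPLIT [simp]: "closed_at n SPLIT"
  and det_value_SPLIT [simp]: "det_value SPLIT"
  by (simp_all add: SPLIT_def SPLIT_body_def SPLIT_step_def)

lemma closed_at_MOVE_INPUT [simp]: "closed_at n (MOVE_INPUT d b)"
  and det_value_MOVE_INPUT [simp]: "det_value (MOVE_INPUT d b)"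
  by (cases b; simp add: MOVE_INPUT_def MOVE_INPUT_body_def MOVE_INPUT_right_body_def
    MOVE_INPUT_stay_body_def MOVE_INPUT_left_body_def)+

lemma closed_at_MOVE_WORK [simp]: "closed_at n (MOVE_WORK mu a)"
  and det_value_MOVE_WORK [simp]: "det_value (MOVE_WORK mu a)"
  by (cases a; cases mu; simp add: MOVE_WORK_def MOVE_WORK_body_def)+

lemma closed_at_STEP_LEAF [simp]: "closed_at n (STEP_LEAF d b a mu s)"
  and det_value_STEP_LEAF [simp]: "det_value (STEP_LEAF d b a mu s)"
  by (simp_all add: STEP_LEAF_def STEP_LEAF_body_def)

lemma closed_at_STUCK_LEAF [simp]: "closed_at n STUCK_LEAF"
  and det_value_STUCK_LEAF [simp]: "det_value STUCK_LEAF"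
  by (simp_all add: STUCK_LEAF_def STUCK_LEAF_body_def)

lemma closed_at_leaf [simp]: "closed_at n (leaf M s a b)"
  and det_value_leaf [simp]: "det_value (leaf M s a b)"
  by (simp_all add: leaf_def split: option.split)

lemma closed_at_READ_INPUT [simp]: "closed_at n (READ_INPUT M s a)"
  and det_value_READ_INPUT [simp]: "det_value (READ_INPUT M s a)"
  by (simp_all add: READ_INPUT_def READ_INPUT_body_def)

lemma closed_at_READ_WORK [simp]: "closed_at n (READ_WORK M s)"
  and det_value_READ_WORK [simp]: "det_value (READ_WORK M s)"
  by (simp_all add: READ_WORK_def READ_WORK_body_def)

lemma closed_at_OUTPUT [simp]: "closed_at n (OUTPUT s)"
  and det_value_OUTPUT [simp]: "det_value (OUTPUT s)"
  by (simp_all add: OUTPUT_def OUTPUT_body_def)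

lemma closed_at_state_branch [simp]: "closed_at n (state_branch M s)"
  and det_value_state_branch [simp]: "det_value (state_branch M s)"
  by (simp_all add: state_branch_def)

lemma closed_at_state_branches [simp]: "\<forall>v\<in>set (state_branches M). closed_at n v"
  and det_value_state_branches [simp]: "\<forall>v\<in>set (state_branches M). det_value v"
  by (simp_all add: state_branches_def)

lemma closed_at_LOOP [simp]: "closed_at n (LOOP M)"
  and det_value_LOOP [simp]: "det_value (LOOP M)"
  by (simp_all add: LOOP_def LOOP_body_def)

lemma closed_at_INIT [simp]: "closed_at n (INIT M)"
  and det_value_INIT [simp]: "det_value (INIT M)"
  by (simp_all add: INIT_def INIT_body_def)

lemma closed_at_TRANS [simp]: "closed_at n (TRANS M)"
  and det_value_TRANS [simp]: "det_value (TRANS M)"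
  by (simp_all add: TRANS_def TRANS_body_def)

lemma next_step_App_of_Lam_def:
  "c = Lam b \<Longrightarrow> next_step (App c v) = (if det_value v then Some (subst b 0 v) else None)"
  by simp

lemmas next_step_App_programs [simp] =
  next_step_App_of_Lam_def[OF DEC_def] next_step_App_of_Lam_def[OF INC_def]
  next_step_App_of_Lam_def[OF SPLIT_def] next_step_App_of_Lam_def[OF MOVE_INPUT_def]
  next_step_App_of_Lam_def[OF MOVE_WORK_def] next_step_App_of_Lam_def[OF STEP_LEAF_def]
  next_step_App_of_Lam_def[OF STUCK_LEAF_def] next_step_App_of_Lam_def[OF READ_INPUT_def]
  next_step_App_of_Lam_def[OF READ_WORK_def] next_step_App_of_Lam_def[OF OUTPUT_def]
  next_step_App_of_Lam_def[OF LOOP_def] next_step_App_of_Lam_def[OF INIT_def]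
  next_step_App_of_Lam_def[OF TRANS_def]

section \<open>Binary counters and splitting the input tape\<close>

lemma bin_pos: "n > 0 \<Longrightarrow> bin n = (n mod 2) # bin (n div 2)"
  by (simp add: bin.simps)

lemma bin_0 [simp]: "bin 0 = []"
  by (simp add: bin.simps)

lemma bin_1 [simp]: "bin (Suc 0) = [1]"
  by (simp add: bin.simps)

lemma length_bin: "length (bin n) = (if n = 0 then 0 else Suc (length (bin (n div 2))))"
  by (simp add: bin_pos)

lemma length_bin_mono: "m \<le> n \<Longrightarrow> length (bin m) \<le> length (bin n)"
proof (induction n arbitrary: m rule: less_induct)
  case (less n)
  show ?case
  proof (cases "m = 0")
    case False
    with less.prems have "m div 2 \<le> n div 2" "n div 2 < n" by (auto simp: div_le_mono)
    with less.IH have "length (bin (m div 2)) \<le> length (bin (n div 2))" by blast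
    with False less.prems show ?thesis by (subst (1 2) length_bin) auto
  qed simp
qed

lemma length_bin_le_log: "n \<ge> 1 \<Longrightarrow> real (length (bin n)) \<le> 1 + log 2 (real n)"
proof (induction n rule: less_induct)
  case (less n)
  show ?case
  proof (cases "n = 1")
    case False
    with less.prems have h: "n div 2 \<ge> 1" "n div 2 < n" by auto
    have "real (length (bin n)) = 1 + real (length (bin (n div 2)))"
      using h by (simp add: bin_pos)
    also have "\<dots> \<le> 1 + (1 + log 2 (real (n div 2)))"
      using less.IH[OF h(2) h(1)] by simp
    also have "1 + log 2 (real (n div 2)) = log 2 (2 * real (n div 2))"
      using h(1) by (simp add: log_mult)
    also have "\<dots> \<le> log 2 (real n)"
      using h(1) by (subst log_le_cancel_iff) auto
    finally show ?thesis by simp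
  qed simp
qed

lemma DEC_red_odd:
  assumes "odd n" "closed_at 0 K" "det_value K"
  shows "red_within 15 (apps DEC [DEC, enc_bin n, K]) (App K (enc_bin (n - 1)))"
proof (cases "n = 1")
  case True
  with assms show ?thesis
    by (intro red_within_run_steps[where m=14]) (simp_all add: DEC_body_def bin_pos[of 1])
next
  case False
  with assms(1) have "n - Suc 0 = 2 * (n div 2)" "n div 2 > 0" "n mod 2 = 1"
    by presburger+
  then have bn: "bin (n - Suc 0) = 0 # bin (n div 2)"
    by (simp add: bin_pos)
  have bq: "bin (n div 2) = (n div 2 mod 2) # bin (n div 2 div 2)"
    using \<open>n div 2 > 0\<close> by (rule bin_pos)
  have "n div 2 mod 2 = 0 \<or> n div 2 mod 2 = 1" by presburger
  then show ?thesis
    using assms \<open>n mod 2 = 1\<close> \<open>n div 2 > 0\<close>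
    by (elim disjE; intro red_within_run_steps[where m=15])
      (simp_all add: DEC_body_def bn bq bin_pos[of n])
qed

lemma DEC_red:
  assumes "closed_at 0 K" "det_value K"
  shows "red_within (10 * length (bin n) + 10) (apps DEC [DEC, enc_bin n, K]) (App K (enc_bin (n - 1)))"
  using assms
proof (induction n arbitrary: K rule: less_induct)
  case (less n)
  consider "n = 0" | "odd n" | "even n" "n \<noteq> 0" by blast
  then show ?case
  proof cases
    case 1
    with less.prems show ?thesis
      by (intro red_within_run_steps[where m=8]) (simp_all add: DEC_body_def)
  next
    case 2
    then have "n \<noteq> 0" by presburger
    then show ?thesis
      by (intro red_within_mono[OF DEC_red_odd[OF 2 less.prems]]) (simp add: length_bin)
  next
    case 3
    text \<open>\<open>2m - 1 = 2(m - 1) + 1\<close>: decrement \<open>m\<close>, then prepend the bit \<open>1\<close>.\<close>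
    define K' where "K' = Lam (App K (lams 3 (App (Var 1) (Var 3))))"
    have K': "closed_at 0 K'" "det_value K'" using less.prems by (simp_all add: K'_def)
    have rec: "red_within 9 (apps DEC [DEC, enc_bin n, K]) (apps DEC [DEC, enc_bin (n div 2), K'])"
      using less.prems 3
      by (intro red_within_run_steps[where m=9]) (simp_all add: DEC_body_def bin_pos[of n] K'_def)
    have "(n - 1) mod 2 = 1" "(n - 1) div 2 = n div 2 - 1" "n - 1 > 0"
      using 3 by presburger+
    then have "bin (n - 1) = 1 # bin (n div 2 - 1)"
      by (subst bin_pos) auto
    then have ret: "red_within 1 (App K' (enc_bin (n div 2 - 1))) (App K (enc_bin (n - 1)))"
      using less.prems by (intro red_within_run_steps[where m=1]) (simp_all add: K'_def)
    have "9 + (10 * length (bin (n div 2)) + 10) + 1 \<le> 10 * length (bin n) + 10"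
      using 3 by (simp add: bin_pos[of n])
    with red_within_trans[OF red_within_trans[OF rec less.IH[OF _ K']] ret] 3 show ?thesis
      by (auto elim: red_within_mono)
  qed
qed

lemma INC_red:
  assumes "closed_at 0 K" "det_value K"
  shows "red_within (10 * length (bin n) + 10) (apps INC [INC, enc_bin n, K]) (App K (enc_bin (Suc n)))"
  using assms
proof (induction n arbitrary: K rule: less_induct)
  case (less n)
  consider "n = 0" | "even n" "n \<noteq> 0" | "odd n" by blast
  then show ?case
  proof cases
    case 1
    with less.prems show ?thesis
      by (intro red_within_run_steps[where m=8]) (simp_all add: INC_body_def)
  next
    case 2
    then have "bin (Suc n) = 1 # bin (n div 2)"
      by (subst bin_pos) (auto elim!: evenE)
    with less.prems 2 show ?thesis
      by (intro red_within_run_steps[where m=9]) (simp_all add: INC_body_def bin_pos[of n])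
  next
    case 3
    text \<open>\<open>(2m + 1) + 1 = 2(m + 1)\<close>: increment \<open>m\<close>, then prepend the bit \<open>0\<close>.\<close>
    define K' where "K' = Lam (App K (lams 3 (App (Var 2) (Var 3))))"
    have K': "closed_at 0 K'" "det_value K'" using less.prems by (simp_all add: K'_def)
    have n: "n \<noteq> 0" "n mod 2 = 1" using 3 by presburger+
    have rec: "red_within 9 (apps INC [INC, enc_bin n, K]) (apps INC [INC, enc_bin (n div 2), K'])"
      using less.prems n
      by (intro red_within_run_steps[where m=9]) (simp_all add: INC_body_def bin_pos[of n] K'_def)
    have "bin (Suc n) = 0 # bin (Suc (n div 2))"
      using 3 by (subst bin_pos) (auto elim!: oddE)
    then have ret: "red_within 1 (App K' (enc_bin (Suc (n div 2)))) (App K (enc_bin (Suc n)))"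
      using less.prems by (intro red_within_run_steps[where m=1]) (simp_all add: K'_def)
    have "9 + (10 * length (bin (n div 2)) + 10) + 1 \<le> 10 * length (bin n) + 10"
      using n by (simp add: bin_pos[of n])
    with red_within_trans[OF red_within_trans[OF rec less.IH[OF _ K']] ret] n show ?thesis
      by (auto elim: red_within_mono)
  qed
qed

lemma SPLIT_red:
  assumes "p \<le> length zr" "length (bin p) \<le> Lb" "closed_at 0 K" "det_value K"
  shows "red_within (p * (35 + 10 * Lb) + 13) (apps SPLIT [SPLIT, enc_bin p, enc_inp zl, enc_inp zr, K])
    (apps K [enc_inp (rev (take p zr) @ zl), enc_inp (drop p zr)])"
  using assms
proof (induction p arbitrary: zl zr)
  case 0
  then show ?case by (intro red_within_run_steps[where m=13]) (simp_all add: SPLIT_body_def SPLIT_step_def)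
next
  case (Suc p)
  then obtain x rest where zr: "zr = x # rest" by (cases zr) auto
  define K1 where "K1 =
      Lam (apps (enc_inp zr)
             [lams 5 (apps (Var 3) [Var 3, Var 2, lams 5 (App (Var 4) (Var 6)), Var 4, Var 0]),
              lams 5 (apps (Var 3) [Var 3, Var 2, lams 5 (App (Var 3) (Var 6)), Var 4, Var 0]),
              lams 5 (apps (Var 3) [Var 3, Var 2, lams 5 (App (Var 2) (Var 6)), Var 4, Var 0]),
              lams 5 (apps (Var 3) [Var 3, Var 2, lams 5 (App (Var 1) (Var 6)), Var 4, Var 0]),
              lams 4 (apps (Var 0) [Var 1, enc_str 4 []]), SPLIT, Var 0, enc_inp zl, K])"
  have K1: "closed_at 0 K1" "det_value K1" using Suc.prems by (simp_all add: K1_def)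
  have "Suc p mod 2 = 0 \<or> Suc p mod 2 = 1" by presburger
  then have r1: "red_within 14 (apps SPLIT [SPLIT, enc_bin (Suc p), enc_inp zl, enc_inp zr, K])
      (apps DEC [DEC, enc_bin (Suc p), K1])"
    using Suc.prems by (elim disjE; intro red_within_run_steps[where m=14])
      (simp_all add: SPLIT_body_def SPLIT_step_def K1_def bin_pos[of "Suc p"])
  have r2: "red_within (10 * Lb + 10) (apps DEC [DEC, enc_bin (Suc p), K1]) (App K1 (enc_bin p))"
    using DEC_red[OF K1, of "Suc p"] Suc.prems(2) by (auto elim: red_within_mono)
  have r3: "red_within 11 (App K1 (enc_bin p))
      (apps SPLIT [SPLIT, enc_bin p, enc_inp (x # zl), enc_inp rest, K])"
    using Suc.prems by (cases x) (intro red_within_run_steps[where m=11]; simp add: K1_def zr)+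
  have "length (bin p) \<le> Lb" using length_bin_mono[of p "Suc p"] Suc.prems(2) by simp
  then have r4: "red_within (p * (35 + 10 * Lb) + 13)
      (apps SPLIT [SPLIT, enc_bin p, enc_inp (x # zl), enc_inp rest, K])
      (apps K [enc_inp (rev (take p rest) @ (x # zl)), enc_inp (drop p rest)])"
    using Suc.IH[of rest "x # zl"] Suc.prems zr by simp
  have "14 + (10 * Lb + 10) + 11 + (p * (35 + 10 * Lb) + 13) \<le> Suc p * (35 + 10 * Lb) + 13" by simp
  with red_within_trans[OF red_within_trans[OF red_within_trans[OF r1 r2] r3] r4]
  show ?case unfolding zr by (simp add: red_within_mono)
qed

section \<open>One step of the machine\<close>

lemma MOVE_INPUT_right_red:
  assumes "closed_at 0 K" "det_value K"
  shows "red_within (10 * length (bin n) + 15) (apps (MOVE_INPUT 1 b) [enc_inp zl, enc_inp rest, enc_bin n, K])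
    (apps K [enc_inp (b # zl), enc_inp rest, enc_bin (Suc n)])"
proof -
  define K' where "K' =
      Lam (apps K [lams 5 (App (Var (5 - idxI b)) (enc_inp zl)), enc_inp rest, Var 0])"
  have K': "closed_at 0 K'" "det_value K'" using assms by (cases b; simp add: K'_def)+
  have r1: "red_within 4 (apps (MOVE_INPUT 1 b) [enc_inp zl, enc_inp rest, enc_bin n, K])
      (apps INC [INC, enc_bin n, K'])"
    using assms by (cases b; intro red_within_run_steps[where m=4];
      simp add: MOVE_INPUT_body_def MOVE_INPUT_right_body_def K'_def)
  have r3: "red_within 1 (App K' (enc_bin (Suc n)))
      (apps K [enc_inp (b # zl), enc_inp rest, enc_bin (Suc n)])"
    using assms by (cases b; intro red_within_run_steps[where m=1]; simp add: K'_def)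
  show ?thesis
    by (rule red_within_mono[OF red_within_trans[OF red_within_trans[OF r1 INC_red[OF K']] r3]]) simp
qed

lemma MOVE_INPUT_stay_red:
  assumes "closed_at 0 K" "det_value K"
  shows "red_within 4 (apps (MOVE_INPUT 0 b) [enc_inp zl, enc_inp rest, enc_bin n, K])
    (apps K [enc_inp zl, enc_inp (b # rest), enc_bin n])"
  using assms by (cases b; intro red_within_run_steps[where m=4];
    simp add: MOVE_INPUT_body_def MOVE_INPUT_stay_body_def)

lemma MOVE_INPUT_left_red:
  assumes "closed_at 0 K" "det_value K"
  shows "red_within (10 * length (bin n) + 24)
    (apps (MOVE_INPUT (-1) b) [enc_inp (c # zl), enc_inp rest, enc_bin n, K])
    (apps K [enc_inp zl, enc_inp (c # b # rest), enc_bin (n - 1)])"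
proof -
  define K' where "K' =
      Lam (apps (enc_inp (c # zl))
             [lams 4 (apps (Var 0)
                        [Var 3, lams 5 (App (Var 4) (lams 5 (App (Var (5 - idxI b)) (Var 12)))),
                         Var 1]),
              lams 4 (apps (Var 0)
                        [Var 3, lams 5 (App (Var 3) (lams 5 (App (Var (5 - idxI b)) (Var 12)))),
                         Var 1]),
              lams 4 (apps (Var 0)
                        [Var 3, lams 5 (App (Var 2) (lams 5 (App (Var (5 - idxI b)) (Var 12)))),
                         Var 1]),
              lams 4 (apps (Var 0)
                        [Var 3, lams 5 (App (Var 1) (lams 5 (App (Var (5 - idxI b)) (Var 12)))),
                         Var 1]),
              lams 3 (apps (Var 0) [enc_str 4 [], Var 2, Var 1]), enc_inp rest, Var 0, K])"
  have K': "closed_at 0 K'" "det_value K'" using assms by (cases b; simp add: K'_def del: enc_str.simps)+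
  have r1: "red_within 4 (apps (MOVE_INPUT (-1) b) [enc_inp (c # zl), enc_inp rest, enc_bin n, K])
      (apps DEC [DEC, enc_bin n, K'])"
    using assms by (cases b; intro red_within_run_steps[where m=4];
      simp add: MOVE_INPUT_body_def MOVE_INPUT_left_body_def K'_def del: enc_str.simps)
  have r3: "red_within 10 (App K' (enc_bin (n - 1)))
      (apps K [enc_inp zl, enc_inp (c # b # rest), enc_bin (n - 1)])"
    using assms by (cases b; cases c; intro red_within_run_steps[where m=10]; simp add: K'_def)
  show ?thesis
    by (rule red_within_mono[OF red_within_trans[OF red_within_trans[OF r1 DEC_red[OF K']] r3]]) simp
qed

text \<open>The input tape is kept split at the head: \<open>zl\<close> is the reversed part left of the head,
  \<open>b\<close> the scanned cell and \<open>rest\<close> the part to its right; \<open>n\<close> is the head position.\<close>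

definition move_input ::
  "int \<Rightarrow> binI \<Rightarrow> binI list \<Rightarrow> binI list \<Rightarrow> nat \<Rightarrow> binI list \<times> binI list \<times> nat" where
  "move_input d b zl rest n =
     (if d = 1 then (b # zl, rest, Suc n) else if d = 0 then (zl, b # rest, n)
      else (tl zl, hd zl # b # rest, n - 1))"

lemma MOVE_INPUT_red:
  assumes "closed_at 0 K" "det_value K" and "d = 1 \<or> d = 0 \<or> (d = -1 \<and> zl \<noteq> [])"
  shows "red_within (10 * length (bin n) + 24) (apps (MOVE_INPUT d b) [enc_inp zl, enc_inp rest, enc_bin n, K])
    (case move_input d b zl rest n of (zl', zr', n') \<Rightarrow> apps K [enc_inp zl', enc_inp zr', enc_bin n'])"
  using assms(3)
proof (elim disjE conjE)
  assume "d = 1"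
  have "red_within (10 * length (bin n) + 24) (apps (MOVE_INPUT 1 b) [enc_inp zl, enc_inp rest, enc_bin n, K])
    (apps K [enc_inp (b # zl), enc_inp rest, enc_bin (Suc n)])"
    by (rule red_within_mono[OF MOVE_INPUT_right_red[OF assms(1,2)]]) simp
  with \<open>d = 1\<close> show ?thesis by (simp add: move_input_def)
next
  assume "d = 0"
  have "red_within (10 * length (bin n) + 24) (apps (MOVE_INPUT 0 b) [enc_inp zl, enc_inp rest, enc_bin n, K])
    (apps K [enc_inp zl, enc_inp (b # rest), enc_bin n])"
    by (rule red_within_mono[OF MOVE_INPUT_stay_red[OF assms(1,2)]]) simp
  with \<open>d = 0\<close> show ?thesis by (simp add: move_input_def)
next
  assume "d = -1" "zl \<noteq> []"
  then show ?thesis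
    using MOVE_INPUT_left_red[OF assms(1,2)] by (auto simp: move_input_def neq_Nil_conv)
qed

lemma MOVE_WORK_red:
  assumes "closed_at 0 K" "det_value K"
  shows "red_within 10 (apps (MOVE_WORK mu a) [enc_work (rev wl), enc_work wr, K])
    (case move_work mu wl a wr of (wl', a', wr') \<Rightarrow> apps K [enc_work (rev wl'), enc_cell a', enc_work wr'])"
proof (cases mu)
  case MStay
  with assms show ?thesis
    by (cases a; intro red_within_run_steps[where m=3]; simp add: MOVE_WORK_body_def)
next
  case MLeft
  show ?thesis
  proof (cases wl rule: rev_cases)
    case Nil
    with assms MLeft show ?thesis
      by (cases a; intro red_within_run_steps[where m=9]; simp add: MOVE_WORK_body_def)
  next
    case (snoc r x)
    with assms MLeft show ?thesis
      by (cases a; cases x; intro red_within_run_steps[where m=10]; simp add: MOVE_WORK_body_def)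
  qed
next
  case MRight
  show ?thesis
  proof (cases wr)
    case Nil
    with assms MRight show ?thesis
      by (cases a; intro red_within_run_steps[where m=9]; simp add: MOVE_WORK_body_def)
  next
    case (Cons x r)
    with assms MRight show ?thesis
      by (cases a; cases x; intro red_within_run_steps[where m=10]; simp add: MOVE_WORK_body_def)
  qed
qed

lemma STEP_LEAF_red:
  assumes "d = 1 \<or> d = 0 \<or> (d = -1 \<and> zl \<noteq> [])"
  shows "red_within (10 * length (bin n) + 50)
    (apps (STEP_LEAF d b a mu s) [enc_inp rest, enc_inp ip, enc_inp zl, enc_bin n, enc_work (rev wl), enc_work wr, LOOP M])
    (case move_input d b zl rest n of (zl', zr', n') \<Rightarrow> case move_work mu wl a wr of (wl2, a2, wr2) \<Rightarrow>
      apps (LOOP M) [LOOP M, enc_inp ip, enc_inp zl', enc_inp zr', enc_bin n', enc_work (rev wl2), enc_cell a2,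
        enc_work wr2, enc_state s])"
proof -
  obtain zl' zr' n' where mv: "move_input d b zl rest n = (zl', zr', n')"
    by (cases "move_input d b zl rest n") auto
  obtain wl2 a2 wr2 where mw: "move_work mu wl a wr = (wl2, a2, wr2)"
    by (cases "move_work mu wl a wr") auto
  define K1 where "K1 =
      lams 3 (apps (MOVE_WORK mu a)
                [enc_work (rev wl), enc_work wr,
                 lams 3 (apps (LOOP M)
                           [LOOP M, enc_inp ip, Var 5, Var 4, Var 3, Var 2, Var 1, Var 0,
                            enc_state s])])"
  define K2 where "K2 =
      lams 3 (apps (LOOP M)
                [LOOP M, enc_inp ip, enc_inp zl', enc_inp zr', enc_bin n', Var 2, Var 1, Var 0,
                 enc_state s])"
  have K1: "closed_at 0 K1" "det_value K1" and K2: "closed_at 0 K2" "det_value K2"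
    by (simp_all add: K1_def K2_def del: enc_str.simps)
  have r1: "red_within 7
      (apps (STEP_LEAF d b a mu s) [enc_inp rest, enc_inp ip, enc_inp zl, enc_bin n, enc_work (rev wl), enc_work wr, LOOP M])
      (apps (MOVE_INPUT d b) [enc_inp zl, enc_inp rest, enc_bin n, K1])"
    by (intro red_within_run_steps[where m=7]) (simp_all add: STEP_LEAF_body_def K1_def del: enc_str.simps)
  have r2: "red_within (10 * length (bin n) + 24) (apps (MOVE_INPUT d b) [enc_inp zl, enc_inp rest, enc_bin n, K1])
      (apps K1 [enc_inp zl', enc_inp zr', enc_bin n'])"
    using MOVE_INPUT_red[OF K1 assms, where n=n and b=b and rest=rest] mv by simp
  have r3: "red_within 3 (apps K1 [enc_inp zl', enc_inp zr', enc_bin n'])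
      (apps (MOVE_WORK mu a) [enc_work (rev wl), enc_work wr, K2])"
    by (intro red_within_run_steps[where m=3]) (simp_all add: K1_def K2_def del: enc_str.simps)
  have r4: "red_within 10 (apps (MOVE_WORK mu a) [enc_work (rev wl), enc_work wr, K2])
      (apps K2 [enc_work (rev wl2), enc_cell a2, enc_work wr2])"
    using MOVE_WORK_red[OF K2, of mu a wl wr] mw by simp
  have r5: "red_within 3 (apps K2 [enc_work (rev wl2), enc_cell a2, enc_work wr2])
      (apps (LOOP M) [LOOP M, enc_inp ip, enc_inp zl', enc_inp zr', enc_bin n', enc_work (rev wl2), enc_cell a2,
        enc_work wr2, enc_state s])"
    by (intro red_within_run_steps[where m=3]) (simp_all add: K2_def del: enc_str.simps)
  have "7 + (10 * length (bin n) + 24) + 3 + 10 + 3 \<le> 10 * length (bin n) + 50" by simp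
  with red_within_trans[OF red_within_trans[OF red_within_trans[OF red_within_trans[OF r1 r2] r3] r4] r5]
  show ?thesis using mv mw by (simp add: red_within_mono)
qed

lemma STUCK_LEAF_red:
  "red_within 7
    (apps STUCK_LEAF [enc_inp rest, enc_inp ip, enc_inp zl, enc_bin n, enc_work (rev wl), enc_work wr, LOOP M])
    Omega"
  by (intro red_within_run_steps[where m=7]) (simp_all add: STUCK_LEAF_body_def del: enc_str.simps)

lemma READ_INPUT_red:
  "red_within 12
    (apps (READ_INPUT M s a) [enc_inp ip, enc_inp zl, enc_inp (b # rest), enc_bin n, enc_work (rev wl), enc_work wr, LOOP M])
    (apps (leaf M s a b) [enc_inp rest, enc_inp ip, enc_inp zl, enc_bin n, enc_work (rev wl), enc_work wr, LOOP M])"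
  by (cases b; intro red_within_run_steps[where m=12]; simp add: READ_INPUT_body_def)

lemma READ_WORK_red:
  "red_within 11
    (apps (READ_WORK M s) [enc_inp ip, enc_inp zl, enc_inp zr, enc_bin n, enc_work (rev wl), enc_cell a, enc_work wr, LOOP M])
    (apps (READ_INPUT M s a) [enc_inp ip, enc_inp zl, enc_inp zr, enc_bin n, enc_work (rev wl), enc_work wr, LOOP M])"
  by (cases a; intro red_within_run_steps[where m=11];
      simp add: READ_WORK_body_def enc_char_def del: enc_str.simps)

lemma OUTPUT_red:
  "red_within 8
    (apps (OUTPUT s) [enc_inp ip, enc_inp zl, enc_inp zr, enc_bin n, enc_work (rev wl), enc_cell a, enc_work wr, LOOP M])
    (Lam (App (Var 0) (Lam (apps (Var 0) [enc_inp ip, enc_bin n, enc_work (rev wl), enc_cell a, enc_work wr, enc_state s]))))"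
  by (intro red_within_run_steps[where m=8]) (simp_all add: OUTPUT_body_def del: enc_str.simps)

lemma nth_sorted_list_of_set_idxQ:
  "sorted_list_of_set (UNIV :: 'q::{finite,linorder} set) ! (idxQ s - 1) = s"
proof -
  define xs where "xs = sorted_list_of_set (UNIV :: 'q set)"
  have d: "distinct xs" and st: "sorted_wrt (<) xs" and st2: "sorted xs" and S: "set xs = UNIV"
    by (simp_all add: xs_def strict_sorted_list_of_set)
  obtain i where i: "i < length xs" "xs ! i = s"
    using S by (metis UNIV_I in_set_conv_nth)
  have "{q. q \<le> s} = set (take (Suc i) xs)"
  proof (intro set_eqI iffI)
    fix q assume q: "q \<in> {q. q \<le> s}"
    obtain j where j: "j < length xs" "xs ! j = q"
      using S by (metis UNIV_I in_set_conv_nth)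
    have "j \<le> i"
    proof (rule ccontr)
      assume "\<not> j \<le> i"
      then have "xs ! i < xs ! j" using sorted_wrt_nth_less[OF st, of i j] j by simp
      then show False using q i j by simp
    qed
    then show "q \<in> set (take (Suc i) xs)" using j by (auto simp: in_set_conv_nth)
  next
    fix q assume "q \<in> set (take (Suc i) xs)"
    then obtain j where "j < length (take (Suc i) xs)" "take (Suc i) xs ! j = q"
      by (auto simp: in_set_conv_nth)
    then have "j \<le> i" "xs ! j = q" by auto
    then show "q \<in> {q. q \<le> s}" using sorted_nth_mono[OF st2, of j i] i by simp
  qed
  then have "idxQ s = Suc i"
    unfolding idxQ_def using d i distinct_card[of "take (Suc i) xs"] by simp
  then show ?thesis using i by (simp add: xs_def)
qed

lemma state_branches_nth_idxQ:
  "state_branches M ! (idxQ s - 1) = state_branch M (s :: 'q::{finite,linorder})"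
proof -
  have "idxQ s - 1 < card (UNIV :: 'q set)"
    using idxQ_pos[of s] idxQ_le[of s] by linarith
  then show ?thesis
    unfolding state_branches_def using nth_sorted_list_of_set_idxQ[of s] by simp
qed

section \<open>Simulation of runs\<close>

text \<open>Besides its split, the loop keeps the whole input string, which a final state has to output.\<close>

definition loop_term :: "'q::{finite,linorder} tm \<Rightarrow> 'q config \<Rightarrow> dterm" where
  "loop_term M C = apps (LOOP M) [LOOP M, enc_inp (inp C), enc_inp (rev (take (pos C) (inp C))),
     enc_inp (drop (pos C) (inp C)), enc_bin (pos C), enc_work (rev (wleft C)), enc_cell (cur C),
     enc_work (wright C), enc_state (state C)]"

lemma loop_term_red_state_branch:
  "red_within_pos (9 + card (UNIV :: 'q set)) (loop_term M (C :: 'q::{finite,linorder} config))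
    (apps (state_branch M (state C)) [enc_inp (inp C), enc_inp (rev (take (pos C) (inp C))),
      enc_inp (drop (pos C) (inp C)), enc_bin (pos C), enc_work (rev (wleft C)), enc_cell (cur C),
      enc_work (wright C), LOOP M])"
    (is "red_within_pos _ _ (apps _ ?args)")
proof -
  have unfold: "red_within_pos 9 (loop_term M C)
      (apps (apps (enc_state (state C)) (state_branches M)) ?args)"
    unfolding loop_term_def
    by (intro red_within_pos_run_steps[where m=9]) (simp_all add: LOOP_body_def del: enc_str.simps)
  have "red_within (card (UNIV :: 'q set)) (apps (enc_state (state C)) (state_branches M))
      (state_branches M ! (idxQ (state C) - 1))"
    unfolding enc_state_def
    by (rule red_within_enc_char) (simp_all add: state_branches_def idxQ_pos idxQ_le)
  then have "red_within (card (UNIV :: 'q set)) (apps (enc_state (state C)) (state_branches M))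
      (state_branch M (state C))"
    by (simp only: state_branches_nth_idxQ)
  from red_within_pos_trans[OF unfold red_within_apps[OF this]] show ?thesis
    by simp
qed

lemma loop_term_red_leaf:
  fixes C :: "'q::{finite,linorder} config"
  assumes "is_config C" "\<not> is_final M C"
  shows "red_within_pos (card (UNIV :: 'q set) + 32) (loop_term M C)
    (apps (leaf M (state C) (cur C) (inp C ! pos C)) [enc_inp (drop (Suc (pos C)) (inp C)), enc_inp (inp C),
      enc_inp (rev (take (pos C) (inp C))), enc_bin (pos C), enc_work (rev (wleft C)), enc_work (wright C), LOOP M])"
proof -
  have "drop (pos C) (inp C) = inp C ! pos C # drop (Suc (pos C)) (inp C)"
    using assms(1) by (simp add: is_config_def Cons_nth_drop_Suc)
  with assms(2) loop_term_red_state_branch[of M C]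
  have "red_within_pos (9 + card (UNIV :: 'q set)) (loop_term M C)
    (apps (READ_WORK M (state C)) [enc_inp (inp C), enc_inp (rev (take (pos C) (inp C))),
      enc_inp (inp C ! pos C # drop (Suc (pos C)) (inp C)), enc_bin (pos C), enc_work (rev (wleft C)),
      enc_cell (cur C), enc_work (wright C), LOOP M])"
    by (simp add: state_branch_def is_final_def)
  from red_within_pos_trans[OF red_within_pos_trans[OF this READ_WORK_red] READ_INPUT_red]
  show ?thesis by (simp add: add.commute)
qed

lemma move_input_split:
  assumes "d \<in> {-1, 0, 1}" "0 \<le> int p + d" "p < length ip"
  shows "move_input d (ip ! p) (rev (take p ip)) (drop (Suc p) ip) p =
    (rev (take (nat (int p + d)) ip), drop (nat (int p + d)) ip, nat (int p + d))"
proof -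
  consider "d = 1" | "d = 0" | "d = -1" using assms(1) by blast
  then show ?thesis
  proof cases
    case 1
    then have "nat (int p + d) = Suc p" by simp
    with 1 assms(3) show ?thesis by (simp add: move_input_def take_Suc_conv_app_nth)
  next
    case 2
    with assms(3) show ?thesis by (simp add: move_input_def Cons_nth_drop_Suc)
  next
    case 3
    with assms(2) obtain q where q: "p = Suc q" by (cases p) auto
    with assms(3) have "drop q ip = ip ! q # ip ! p # drop (Suc p) ip"
      by (simp add: Cons_nth_drop_Suc)
    with 3 q assms(3) show ?thesis by (simp add: move_input_def take_Suc_conv_app_nth)
  qed
qed

lemma loop_term_simulates_tm_step:
  fixes M :: "'q::{finite,linorder} tm"
  assumes wf: "wf_tm M" and st: "stays_on_input M" and cf: "is_config C" and ts: "tm_step M C D"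
  shows "red_within_pos (10 * length (bin (pos C)) + card (UNIV :: 'q set) + 82) (loop_term M C) (loop_term M D)
    \<and> is_config D \<and> inp D = inp C"
proof -
  from ts obtain d a' mu s' wl a wr where
    nf: "\<not> is_final M C" and pl: "pos C < length (inp C)" and
    dl: "delta M (inp C ! pos C) (cur C) (state C) = Some (d, a', mu, s')" and
    mw: "move_work mu (wleft C) a' (wright C) = (wl, a, wr)" and
    D: "D = \<lparr>inp = inp C, pos = nat (int (pos C) + d), wleft = wl, cur = a, wright = wr, state = s'\<rparr>"
    by (cases rule: tm_step.cases) auto
  have d: "d \<in> {-1, 0, 1}" using wf dl unfolding wf_tm_def by blast
  have bd: "0 \<le> int (pos C) + d \<and> int (pos C) + d < int (length (inp C))"
    using st cf pl dl unfolding stays_on_input_def is_config_def by blast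
  have leaf: "red_within_pos (card (UNIV :: 'q set) + 32) (loop_term M C)
    (apps (STEP_LEAF d (inp C ! pos C) a' mu s') [enc_inp (drop (Suc (pos C)) (inp C)), enc_inp (inp C),
      enc_inp (rev (take (pos C) (inp C))), enc_bin (pos C), enc_work (rev (wleft C)), enc_work (wright C), LOOP M])"
    using loop_term_red_leaf[OF cf nf] dl by (simp add: leaf_def)
  have "d = 1 \<or> d = 0 \<or> (d = -1 \<and> rev (take (pos C) (inp C)) \<noteq> [])"
    using d bd pl by auto
  from STEP_LEAF_red[OF this, of "pos C" "inp C ! pos C" a' mu s' "drop (Suc (pos C)) (inp C)" "inp C"
      "wleft C" "wright C" M]
  have "red_within (10 * length (bin (pos C)) + 50)
    (apps (STEP_LEAF d (inp C ! pos C) a' mu s') [enc_inp (drop (Suc (pos C)) (inp C)), enc_inp (inp C),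
      enc_inp (rev (take (pos C) (inp C))), enc_bin (pos C), enc_work (rev (wleft C)), enc_work (wright C), LOOP M])
    (loop_term M D)"
    using move_input_split[OF d] bd pl mw by (simp add: loop_term_def D)
  from red_within_pos_trans[OF leaf this]
  have "red_within_pos (10 * length (bin (pos C)) + card (UNIV :: 'q set) + 82) (loop_term M C) (loop_term M D)"
    by (rule red_within_pos_mono) simp
  moreover have "is_config D"
    using cf bd by (simp add: is_config_def D nat_less_iff)
  ultimately show ?thesis
    by (simp add: D)
qed

lemma enc_config_eq:
  "enc_config C = Lam (apps (Var 0) [enc_inp (inp C), enc_bin (pos C), enc_work (rev (wleft C)),
     enc_cell (cur C), enc_work (wright C), enc_state (state C)])"
  by (simp add: enc_config_def enc_state_def)

lemma closed_at_enc_config [simp]: "closed_at n (enc_config C)"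
  by (simp add: enc_config_eq del: enc_str.simps)

lemma det_value_enc_config [simp]: "det_value (enc_config C)"
  by (simp add: enc_config_eq del: enc_str.simps)

lemma loop_term_final:
  fixes M :: "'q::{finite,linorder} tm"
  assumes "is_final M C" "det_value k"
  shows "red_within (card (UNIV :: 'q set) + 18) (App (loop_term M C) k) (App k (enc_config C))"
proof -
  let ?out = "Lam (App (Var 0) (Lam (apps (Var 0) [enc_inp (inp C), enc_bin (pos C), enc_work (rev (wleft C)),
      enc_cell (cur C), enc_work (wright C), enc_state (state C)])))"
  have "state_branch M (state C) = OUTPUT (state C)"
    using assms(1) by (simp add: state_branch_def is_final_def)
  from red_within_pos_imp_red_within[OF loop_term_red_state_branch[of M C, unfolded this]]
  have "red_within (9 + card (UNIV :: 'q set) + 8) (loop_term M C) ?out"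
    using OUTPUT_red by (rule red_within_trans)
  from red_within_App[OF this assms(2)]
  have "red_within (9 + card (UNIV :: 'q set) + 8) (App (loop_term M C) k) (App ?out k)" .
  moreover have "red_within 1 (App ?out k) (App k (enc_config C))"
    using assms(2) by (intro red_within_run_steps[where m=1]) (simp_all add: enc_config_eq del: enc_str.simps)
  ultimately have "red_within (9 + card (UNIV :: 'q set) + 8 + 1) (App (loop_term M C) k) (App k (enc_config C))"
    by (rule red_within_trans)
  then show ?thesis
    by (rule red_within_mono) simp
qed

lemma loop_term_stuck_diverges:
  fixes M :: "'q::{finite,linorder} tm"
  assumes "is_config C" "\<not> is_final M C" "delta M (inp C ! pos C) (cur C) (state C) = None"
    and "det_value k"
  shows "diverges (App (loop_term M C) k)"
proof -
  have "leaf M (state C) (cur C) (inp C ! pos C) = STUCK_LEAF"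
    using assms(3) by (simp add: leaf_def)
  from red_within_pos_imp_red_within[OF loop_term_red_leaf[OF assms(1,2), unfolded this]]
  have "red_within (card (UNIV :: 'q set) + 32 + 7) (loop_term M C) Omega"
    using STUCK_LEAF_red by (rule red_within_trans)
  then obtain m where "(det_step ^^ m) (App (loop_term M C) k) (App Omega k)"
    unfolding red_within_def using det_steps_App[OF _ assms(4)] by blast
  with diverges_App[OF Omega_diverges assms(4)] show ?thesis
    using diverges_det_steps by blast
qed

lemma TRANS_red_loop_term:
  fixes M :: "'q::{finite,linorder} tm"
  assumes "is_config C" "det_value k"
  shows "red_within (pos C * (35 + 10 * length (bin (pos C))) + 24) (App (App (TRANS M) k) (enc_config C))
    (App (loop_term M C) k)"
proof -
  define K0 where "K0 =
      lams 2 (apps (LOOP M)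
                [LOOP M, enc_inp (inp C), Var 1, Var 0, enc_bin (pos C), enc_work (rev (wleft C)),
                 enc_cell (cur C), enc_work (wright C), enc_state (state C)])"
  have K0: "closed_at 0 K0" "det_value K0"
    by (simp_all add: K0_def del: enc_str.simps)
  have i1: "red_within 2 (App (App (TRANS M) k) (enc_config C)) (App (App (enc_config C) (INIT M)) k)"
    using assms(2) by (intro red_within_run_steps[where m=2]) (simp_all add: TRANS_body_def)
  have i2: "red_within 7 (App (enc_config C) (INIT M)) (apps SPLIT [SPLIT, enc_bin (pos C), enc_inp [], enc_inp (inp C), K0])"
    unfolding enc_config_eq
    by (intro red_within_run_steps[where m=7]) (simp_all add: INIT_body_def K0_def del: enc_str.simps)
  have "pos C \<le> length (inp C)"
    using assms(1) by (simp add: is_config_def)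
  from SPLIT_red[OF this order.refl K0, where zl = "[]"]
  have i3: "red_within (pos C * (35 + 10 * length (bin (pos C))) + 13)
      (apps SPLIT [SPLIT, enc_bin (pos C), enc_inp [], enc_inp (inp C), K0])
      (apps K0 [enc_inp (rev (take (pos C) (inp C))), enc_inp (drop (pos C) (inp C))])"
    by simp
  have i4: "red_within 2 (apps K0 [enc_inp (rev (take (pos C) (inp C))), enc_inp (drop (pos C) (inp C))]) (loop_term M C)"
    by (intro red_within_run_steps[where m=2]) (simp_all add: K0_def loop_term_def del: enc_str.simps)
  from red_within_trans[OF i1 red_within_App[OF red_within_trans[OF red_within_trans[OF i2 i3] i4] assms(2)]]
  show ?thesis by (simp add: add.commute add.left_commute)
qed

lemma loop_term_reaches_final:
  fixes M :: "'q::{finite,linorder} tm"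
  assumes wf: "wf_tm M" and st: "stays_on_input M" and k: "det_value k"
  shows "(tm_step M ^^ n) C D \<Longrightarrow> is_config C \<Longrightarrow> is_final M D \<Longrightarrow>
    red_within (n * (10 * length (bin (length (inp C))) + card (UNIV :: 'q set) + 82) + card (UNIV :: 'q set) + 18)
      (App (loop_term M C) k) (App k (enc_config D))"
proof (induction n arbitrary: C)
  case 0
  then show ?case using loop_term_final[OF _ k] by simp
next
  case (Suc n)
  then obtain C' where ts: "tm_step M C C'" and rest: "(tm_step M ^^ n) C' D"
    by (metis relpowp_Suc_D2)
  have step: "red_within_pos (10 * length (bin (pos C)) + card (UNIV :: 'q set) + 82) (loop_term M C) (loop_term M C')"
    and cf': "is_config C'" and "inp C' = inp C"
    using loop_term_simulates_tm_step[OF wf st Suc.prems(2) ts] by auto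
  have "length (bin (pos C)) \<le> length (bin (length (inp C)))"
    using Suc.prems(2) by (intro length_bin_mono) (simp add: is_config_def)
  then have "red_within (10 * length (bin (length (inp C))) + card (UNIV :: 'q set) + 82)
      (App (loop_term M C) k) (App (loop_term M C') k)"
    by (intro red_within_App[OF red_within_mono[OF red_within_pos_imp_red_within[OF step]] k]) simp
  from red_within_trans[OF this Suc.IH[OF rest cf' Suc.prems(3)]] \<open>inp C' = inp C\<close>
  show ?case by (simp add: red_within_mono)
qed

lemma loop_term_diverges:
  fixes M :: "'q::{finite,linorder} tm"
  assumes wf: "wf_tm M" and st: "stays_on_input M" and k: "det_value k" and cf: "is_config C"
    and no_final: "\<nexists>n D. (tm_step M ^^ n) C D \<and> is_final M D"
  shows "diverges (App (loop_term M C) k)"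
proof -
  define P where
    "P t \<longleftrightarrow> diverges t \<or> (\<exists>C' j. (tm_step M ^^ j) C C' \<and> is_config C' \<and> t = App (loop_term M C') k)"
    for t
  have "\<exists>t' j. P t' \<and> (det_step ^^ Suc j) t t'" if "P t" for t
  proof (cases "diverges t")
    case True
    then obtain u where "det_step t u" "diverges u"
      using diverges_Suc by blast
    then have "P u" "(det_step ^^ Suc 0) t u"
      unfolding P_def by auto
    then show ?thesis by blast
  next
    case False
    with \<open>P t\<close> obtain C' j where run: "(tm_step M ^^ j) C C'" and cf': "is_config C'"
      and t: "t = App (loop_term M C') k"
      unfolding P_def by blast
    have nf: "\<not> is_final M C'" using no_final run by blast
    have pl: "pos C' < length (inp C')" using cf' by (simp add: is_config_def)
    have "delta M (inp C' ! pos C') (cur C') (state C') \<noteq> None"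
      using loop_term_stuck_diverges[OF cf' nf _ k] False t by blast
    then obtain d a' mu s' where dl: "delta M (inp C' ! pos C') (cur C') (state C') = Some (d, a', mu, s')"
      by (metis not_None_eq prod_cases4)
    obtain wl a wr where mw: "move_work mu (wleft C') a' (wright C') = (wl, a, wr)"
      by (cases "move_work mu (wleft C') a' (wright C')") auto
    have "0 \<le> int (pos C') + d"
      using st cf' pl dl unfolding stays_on_input_def is_config_def by blast
    with nf pl dl mw obtain D where ts: "tm_step M C' D"
      by (blast intro: tm_step.intros)
    obtain m where "0 < m" "(det_step ^^ m) (loop_term M C') (loop_term M D)" and cfD: "is_config D"
      using loop_term_simulates_tm_step[OF wf st cf' ts] unfolding red_within_pos_def by blast
    then obtain j' where "(det_step ^^ Suc j') t (App (loop_term M D) k)"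
      using det_steps_App[OF _ k] t by (metis Suc_pred)
    moreover have "P (App (loop_term M D) k)"
      unfolding P_def using run ts cfD by (blast intro: relpowp_Suc_I)
    ultimately show ?thesis by blast
  qed
  moreover have "P (App (loop_term M C) k)"
    unfolding P_def using cf by (blast intro: relpowp_0_I)
  ultimately show ?thesis by (rule diverges_progress[where P = P, rotated])
qed

section \<open>The cost bound\<close>

lemma simulation_cost_le:
  fixes L lg LB q n :: real
  assumes L: "L \<ge> 2" and lg: "lg \<ge> 1" and LB: "LB \<le> 1 + lg" "LB \<ge> 0" and q: "q \<ge> 0" and n: "n \<ge> 0"
  shows "L * (35 + 10 * LB) + 24 + (n * (10 * LB + q + 82) + q + 18) \<le> (q + 102) * (n + 1) * L * lg"
proof -
  have "1 * 1 \<le> L * lg" using L lg by (intro mult_mono) auto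
  then have one_le: "1 \<le> L * lg" by simp
  have init: "L * (35 + 10 * LB) \<le> L * (55 * lg)" using L LB lg by (intro mult_left_mono) auto
  have "(q + 92) * 1 \<le> (q + 92) * lg" using q lg by (intro mult_left_mono) auto
  then have "10 * LB + q + 82 \<le> (q + 102) * lg" using LB by (simp add: algebra_simps)
  also have "\<dots> \<le> (q + 102) * lg * L"
    using q lg L mult_left_mono[of 1 L "(q + 102) * lg"] by simp
  finally have steps: "n * (10 * LB + q + 82) \<le> n * ((q + 102) * lg * L)"
    using n by (intro mult_left_mono) auto
  have final: "(q + 47) * 1 \<le> (q + 47) * (L * lg)" using one_le q by (intro mult_left_mono) auto
  have "L * (35 + 10 * LB) + 24 + (n * (10 * LB + q + 82) + q + 18)
      \<le> L * (55 * lg) + 24 + n * ((q + 102) * lg * L) + q + 18" using init steps by linarith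
  also have "\<dots> \<le> (q + 102) * (n + 1) * L * lg" using final by (simp add: algebra_simps)
  finally show ?thesis .
qed

lemma TRANS_reaches_final:
  fixes M :: "'q::{finite,linorder} tm"
  assumes "wf_tm M" "stays_on_input M" "det_value k" "is_config C"
    and run: "(tm_step M ^^ n) C D" and "is_final M D"
  shows "\<exists>m. det_steps m (App (App (TRANS M) k) (enc_config C)) (App k (enc_config D)) \<and>
    real m \<le> (real (card (UNIV :: 'q set)) + 102) * (real n + 1) * real (length (inp C)) * log 2 (real (length (inp C)))"
proof -
  define q where "q = card (UNIV :: 'q set)"
  define L where "L = length (inp C)"
  define LB where "LB = length (bin L)"
  have L2: "2 \<le> L" and pL: "pos C < L"
    using assms(4) by (auto simp: is_config_def L_def valid_input_def)
  have "pos C * (35 + 10 * length (bin (pos C))) \<le> L * (35 + 10 * LB)"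
    using pL length_bin_mono[of "pos C" L] by (intro mult_mono) (auto simp: LB_def)
  with red_within_trans[OF TRANS_red_loop_term[OF assms(4,3)] loop_term_reaches_final[OF assms(1-3) run assms(4,6)]]
  have "red_within (L * (35 + 10 * LB) + 24 + (n * (10 * LB + q + 82) + q + 18))
      (App (App (TRANS M) k) (enc_config C)) (App k (enc_config D))"
    by (auto simp: LB_def L_def q_def elim!: red_within_mono)
  then obtain m where m: "m \<le> L * (35 + 10 * LB) + 24 + (n * (10 * LB + q + 82) + q + 18)"
    and steps: "(det_step ^^ m) (App (App (TRANS M) k) (enc_config C)) (App k (enc_config D))"
    unfolding red_within_def by blast
  have "real m \<le> real L * (35 + 10 * real LB) + 24 + (real n * (10 * real LB + real q + 82) + real q + 18)"
    using m of_nat_mono[OF m] by simp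
  also have "\<dots> \<le> (real q + 102) * (real n + 1) * real L * log 2 (real L)"
    using L2 length_bin_le_log[of L] by (intro simulation_cost_le) (auto simp: LB_def)
  finally show ?thesis
    using steps by (auto simp: det_steps_def q_def L_def)
qed

lemma TRANS_diverges:
  fixes M :: "'q::{finite,linorder} tm"
  assumes "wf_tm M" "stays_on_input M" "det_value k" "is_config C"
    and "\<nexists>n D. (tm_step M ^^ n) C D \<and> is_final M D"
  shows "diverges (App (App (TRANS M) k) (enc_config C))"
proof -
  obtain m where "(det_step ^^ m) (App (App (TRANS M) k) (enc_config C)) (App (loop_term M C) k)"
    using TRANS_red_loop_term[OF assms(4,3)] unfolding red_within_def by blast
  then show ?thesis
    using loop_term_diverges[OF assms] by (rule diverges_det_steps)
qed

theorem mainTheorem9: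
  fixes M :: "'q::{finite,linorder} tm"
  assumes "wf_tm M"
    and "stays_on_input M"
  shows "\<exists>trans (c::real). closed trans \<and> det_term trans \<and>
    (\<forall>k C. det_value k \<longrightarrow> is_config C \<longrightarrow>
      (\<forall>n D. (tm_step M ^^ n) C D \<longrightarrow> is_final M D \<longrightarrow>
         (\<exists>m. det_steps m (App (App trans k) (enc_config C)) (App k (enc_config D)) \<and>
              real m \<le> c * (real n + 1) * real (length (inp C)) * log 2 (real (length (inp C)))))
      \<and> ((\<nexists>n D. (tm_step M ^^ n) C D \<and> is_final M D) \<longrightarrow>
         diverges (App (App trans k) (enc_config C))))"
proof (intro exI[of _ "TRANS M"] exI[of _ "real (card (UNIV :: 'q set)) + 102"] conjI allI impI)
  show "closed (TRANS M)" "det_term (TRANS M)"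
    by (simp_all add: closed_def)
next
  fix k C n D
  assume "det_value k" "is_config C" "(tm_step M ^^ n) C D" "is_final M D"
  then show "\<exists>m. det_steps m (App (App (TRANS M) k) (enc_config C)) (App k (enc_config D)) \<and>
      real m \<le> (real (card (UNIV :: 'q set)) + 102) * (real n + 1) * real (length (inp C)) *
        log 2 (real (length (inp C)))"
    by (rule TRANS_reaches_final[OF assms])
next
  fix k C
  assume "det_value k" "is_config C" "\<nexists>n D. (tm_step M ^^ n) C D \<and> is_final M D"
  then show "diverges (App (App (TRANS M) k) (enc_config C))"
    by (rule TRANS_diverges[OF assms])
qed

end
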